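(* Let $\gamma$ be a generator of $\mathbb{F}_{q^m}^*$, let $\ell\in\{0,1,\dots,q-2\}$, and let $\beta_1,\dots,\beta_m\in\mathbb{F}_{q^m}$ be linearly independent over $\mathbb{F}_q$. Then the $m\times m$ matrix $M$ whose $(i,j)$ entry, for $i=0,\dots,m-1$ and $j=1,\dots,m$, is $\gamma^{\ell(1+q+\cdots+q^{i-1})}\beta_j^{q^i-1}$ (so row $i=0$ is all ones) is full rank. *)

theory Defs
  imports "Jordan_Normal_Form.DL_Rank"
begin

definition subfield_Fq :: "nat \<Rightarrow> 'a::field set" where
  "subfield_Fq q = {x. x ^ q = x}"

definition lin_indep_over_Fq :: "nat \<Rightarrow> nat \<Rightarrow> (nat \<Rightarrow> 'a::field) \<Rightarrow> bool" where
  "lin_indep_over_Fq q m \<beta> \<longleftrightarrow>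
     (\<forall>c. (\<forall>j\<in>{1..m}. c j \<in> subfield_Fq q) \<and> (\<Sum>j=1..m. c j * \<beta> j) = 0
          \<longrightarrow> (\<forall>j\<in>{1..m}. c j = 0))"

definition mult_generator :: "'a::field \<Rightarrow> bool" where
  "mult_generator \<gamma> \<longleftrightarrow> \<gamma> \<noteq> 0 \<and> (\<forall>x. x \<noteq> 0 \<longrightarrow> (\<exists>k::nat. x = \<gamma> ^ k))"

end

(*
  Dividing row i of M by the nonzero factor gamma^(l(1 + q + ... + q^(i-1))) and multiplying
  column j by beta_j gives the Moore matrix (beta_j^(q^i)). A vanishing combination of its rows,
  sum_i a_i beta_j^(q^i) = 0 for all j, says that the linearized polynomial
  L = sum_i a_i X^(q^i) vanishes at every beta_j. Since q is a power of the characteristic,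
  x -> x^q is additive and fixes F_q = {x. x^q = x}, so L also vanishes on the F_q-span of the
  beta_j, which by linear independence has |F_q|^m >= q^m elements; as deg L <= q^(m-1), L = 0.
  That q is a power of the characteristic follows from Sylow's theorem in the additive group,
  and |F_q| >= q from the generator gamma: with s = 1 + q + ... + q^(m-1), the powers
  gamma^(s t), t < q - 1, are distinct solutions of x^(q-1) = 1.
*)

theory Submission
  imports Defs "HOL-Algebra.Sylow" "HOL-Algebra.Multiplicative_Group"
    "HOL-Computational_Algebra.Polynomial" "HOL-Computational_Algebra.Primes"
begin

definition additive_group :: "'a::ab_group_add monoid" where
  "additive_group = \<lparr>carrier = UNIV, monoid.mult = (+), one = 0\<rparr>"

definition multiplicative_group :: "'a::field monoid" where
  "multiplicative_group = \<lparr>carrier = UNIV - {0}, monoid.mult = (*), one = 1\<rparr>"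

lemma group_additive_group: "group (additive_group :: 'a::ab_group_add monoid)"
proof (rule groupI)
  fix x :: 'a
  show "\<exists>y\<in>carrier additive_group. y \<otimes>\<^bsub>additive_group\<^esub> x = \<one>\<^bsub>additive_group\<^esub>"
    by (intro bexI[of _ "- x"]) (auto simp: additive_group_def)
qed (auto simp: additive_group_def add_ac)

lemma group_multiplicative_group: "group (multiplicative_group :: 'a::field monoid)"
proof (rule groupI)
  fix x :: 'a assume "x \<in> carrier multiplicative_group"
  then show "\<exists>y\<in>carrier multiplicative_group. y \<otimes>\<^bsub>multiplicative_group\<^esub> x = \<one>\<^bsub>multiplicative_group\<^esub>"
    by (intro bexI[of _ "inverse x"]) (auto simp: multiplicative_group_def)
qed (auto simp: multiplicative_group_def mult_ac)

lemma additive_group_pow: "x [^]\<^bsub>additive_group\<^esub> n = of_nat n * (x :: 'a::ring_1)"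
  by (induction n) (simp_all add: additive_group_def algebra_simps)

lemma multiplicative_group_pow: "x [^]\<^bsub>multiplicative_group\<^esub> n = (x :: 'a::field) ^ n"
  by (induction n) (simp_all add: multiplicative_group_def mult_ac)

lemma prime_CHAR_finite_field: "prime CHAR('a::{field,finite})"
  by (simp add: finite_imp_CHAR_pos prime_CHAR_semidom)

lemma prime_dvd_card_imp_eq_CHAR:
  assumes "prime r" and "r dvd card (UNIV :: 'a::{field,finite} set)"
  shows "r = CHAR('a)"
proof -
  interpret G: group "additive_group :: 'a monoid" by (rule group_additive_group)
  obtain k where order: "Coset.order (additive_group :: 'a monoid) = r ^ 1 * k"
    using assms(2) by (auto simp: additive_group_def Coset.order_def)
  have "finite (carrier (additive_group :: 'a monoid))"
    by (simp add: additive_group_def)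
  then obtain H where H: "subgroup H (additive_group :: 'a monoid)" "card H = r"
    using sylow_thm[OF assms(1) G.is_group order] by auto
  have "\<not> H \<subseteq> {0}"
    using card_mono[of "{0}" H] H(2) prime_gt_1_nat[OF assms(1)] by auto
  then obtain h where h: "h \<in> H" "h \<noteq> 0"
    by auto
  interpret H: group "additive_group\<lparr>carrier := H\<rparr> :: 'a monoid"
    by (rule G.subgroup_imp_group[OF H(1)])
  have "h [^]\<^bsub>additive_group\<lparr>carrier := H\<rparr>\<^esub> Coset.order (additive_group\<lparr>carrier := H\<rparr>) = 0"
    using H.pow_order_eq_1[of h] h by (simp add: additive_group_def)
  then have "of_nat r * h = 0"
    using H(2) by (simp add: Coset.order_def additive_group_pow flip: G.nat_pow_consistent)
  then have "CHAR('a) dvd r"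
    using h(2) by (simp add: of_nat_eq_0_iff_char_dvd)
  then show ?thesis
    using assms(1) prime_CHAR_finite_field primes_dvd_imp_eq by metis
qed

lemma CHAR_power_if_power_eq_card:
  assumes "card (UNIV :: 'a::{field,finite} set) = q ^ m" and "m \<ge> 1"
  shows "\<exists>k. q = CHAR('a) ^ k"
proof (rule ccontr)
  assume "\<nexists>k. q = CHAR('a) ^ k"
  moreover have "q \<noteq> 0"
    using assms finite_UNIV_card_ge_0[where ?'a = 'a] by (auto simp: zero_power)
  ultimately obtain r where r: "r \<in> prime_factors q" "r \<noteq> CHAR('a)"
    using Ex_other_prime_factor[of q "CHAR('a)"] prime_CHAR_finite_field by auto
  then have "r dvd card (UNIV :: 'a set)"
    using assms dvd_trans[OF in_prime_factors_imp_dvd[OF r(1)] dvd_power[of m q]] by simp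
  then show False
    using r prime_dvd_card_imp_eq_CHAR by auto
qed

lemma order_multiplicative_group:
  "Coset.order (multiplicative_group :: 'a::{field,finite} monoid) = card (UNIV :: 'a set) - 1"
  by (simp add: Coset.order_def multiplicative_group_def card_Diff_singleton)

lemma power_card_minus_1_eq_1:
  fixes x :: "'a::{field,finite}"
  assumes "x \<noteq> 0"
  shows "x ^ (card (UNIV :: 'a set) - 1) = 1"
proof -
  interpret group "multiplicative_group :: 'a monoid" by (rule group_multiplicative_group)
  have "x \<in> carrier multiplicative_group"
    using assms by (simp add: multiplicative_group_def)
  then have "x [^]\<^bsub>multiplicative_group\<^esub> Coset.order (multiplicative_group :: 'a monoid) = \<one>\<^bsub>multiplicative_group\<^esub>"
    by (rule pow_order_eq_1)
  then show ?thesis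
    by (simp add: order_multiplicative_group multiplicative_group_pow) (simp add: multiplicative_group_def)
qed

lemma ord_mult_generator:
  fixes \<gamma> :: "'a::{field,finite}"
  assumes "mult_generator \<gamma>"
  shows "group.ord multiplicative_group \<gamma> = card (UNIV :: 'a set) - 1"
proof -
  let ?G = "multiplicative_group :: 'a monoid"
  interpret group ?G by (rule group_multiplicative_group)
  have fin: "finite (carrier ?G)"
    by simp
  have \<gamma>: "\<gamma> \<in> carrier ?G"
    using assms by (simp add: mult_generator_def multiplicative_group_def)
  have "carrier ?G \<subseteq> {\<gamma> [^]\<^bsub>?G\<^esub> k | k. k \<in> (UNIV :: nat set)}"
    unfolding multiplicative_group_pow using assms
    by (auto simp: mult_generator_def multiplicative_group_def)
  also have "\<dots> = (\<lambda>k. \<gamma> [^]\<^bsub>?G\<^esub> k) ` {0..ord \<gamma> - 1}"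
    using ord_elems[OF fin \<gamma>] by (simp only: Setcompr_eq_image)
  finally have "Coset.order ?G \<le> card ((\<lambda>k. \<gamma> [^]\<^bsub>?G\<^esub> k) ` {0..ord \<gamma> - 1})"
    unfolding Coset.order_def by (rule card_mono[rotated]) simp
  also have "\<dots> \<le> ord \<gamma>"
    using card_image_le[of "{0..ord \<gamma> - 1}"] ord_ge_1[OF fin \<gamma>] by simp
  finally have "ord \<gamma> = Coset.order ?G"
    using ord_le_group_order[OF fin \<gamma>] by simp
  then show ?thesis
    by (simp add: order_multiplicative_group)
qed

lemma inj_on_mult_generator_power:
  fixes \<gamma> :: "'a::{field,finite}"
  assumes "mult_generator \<gamma>"
  shows "inj_on (\<lambda>k. \<gamma> ^ k) {..<card (UNIV :: 'a set) - 1}"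
proof -
  interpret group "multiplicative_group :: 'a monoid" by (rule group_multiplicative_group)
  have \<gamma>: "\<gamma> \<in> carrier multiplicative_group"
    using assms by (simp add: mult_generator_def multiplicative_group_def)
  have "{0..ord \<gamma> - 1} = {..<card (UNIV :: 'a set) - 1}"
    using ord_mult_generator[OF assms] ord_ge_1[OF _ \<gamma>] by auto
  then show ?thesis
    using ord_inj[OF \<gamma>] by (simp add: multiplicative_group_pow)
qed

lemma card_subfield_Fq_ge:
  fixes \<gamma> :: "'a::{field,finite}"
  assumes card: "card (UNIV :: 'a set) = q ^ m" and "q \<ge> 2" and gen: "mult_generator \<gamma>"
  shows "q \<le> card (subfield_Fq q :: 'a set)"
proof -
  define N where "N = card (UNIV :: 'a set)"
  define s where "s = (\<Sum>i<m. q ^ i)"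
  obtain r where r: "q = Suc r"
    using \<open>q \<ge> 2\<close> by (cases q) auto
  have "(\<Sum>i<m. Suc r ^ i) * r + 1 = Suc r ^ m"
    by (induction m) (simp_all add: algebra_simps)
  then have s: "s * (q - 1) = N - 1"
    unfolding s_def N_def card r by simp
  have "card {0, 1 :: 'a} \<le> N"
    unfolding N_def by (rule card_mono) simp_all
  then have "s > 0"
    using s by (cases "s = 0") auto
  have \<gamma>: "\<gamma> \<noteq> 0"
    using gen by (simp add: mult_generator_def)
  define T where "T = (\<lambda>t. \<gamma> ^ (s * t)) ` {..<q - 1}"
  have "T \<subseteq> subfield_Fq q - {0}"
  proof
    fix z assume "z \<in> T"
    then obtain t where z: "z = \<gamma> ^ (s * t)"
      by (auto simp: T_def)
    have "z ^ (q - 1) = (\<gamma> ^ (N - 1)) ^ t"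
      unfolding z s[symmetric] power_mult[symmetric] by (simp add: mult_ac)
    also have "\<dots> = 1"
      unfolding N_def using power_card_minus_1_eq_1[OF \<gamma>] by simp
    finally have "z ^ q = z"
      using r by simp
    then show "z \<in> subfield_Fq q - {0}"
      using \<gamma> z by (simp add: subfield_Fq_def)
  qed
  moreover have "inj_on (\<lambda>t. \<gamma> ^ (s * t)) {..<q - 1}"
  proof (rule comp_inj_on[of "\<lambda>t. s * t" _ "\<lambda>k. \<gamma> ^ k", unfolded comp_def])
    show "inj_on (\<lambda>t. s * t) {..<q - 1}"
      using \<open>s > 0\<close> by (simp add: inj_on_def)
    have "(\<lambda>t. s * t) ` {..<q - 1} \<subseteq> {..<N - 1}"
      unfolding s[symmetric] using \<open>s > 0\<close> by auto
    then show "inj_on (\<lambda>k. \<gamma> ^ k) ((\<lambda>t. s * t) ` {..<q - 1})"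
      using inj_on_mult_generator_power[OF gen] inj_on_subset unfolding N_def by blast
  qed
  then have "card T = q - 1"
    by (simp add: T_def card_image)
  moreover have "0 \<notin> T"
    using \<open>T \<subseteq> subfield_Fq q - {0}\<close> by blast
  ultimately have "card (insert 0 T) = q"
    using r by simp
  moreover have "insert 0 T \<subseteq> subfield_Fq q"
    using \<open>T \<subseteq> subfield_Fq q - {0}\<close> \<open>q \<ge> 2\<close> by (auto simp: subfield_Fq_def)
  ultimately show ?thesis
    using card_mono[of "subfield_Fq q" "insert 0 T"] by simp
qed

lemma subfield_Fq_power:
  assumes "c \<in> subfield_Fq q"
  shows "c ^ (q ^ i) = c"
proof (induction i)
  case (Suc i)
  have "c ^ (q ^ Suc i) = (c ^ q) ^ (q ^ i)"
    by (simp add: power_mult mult.commute)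
  then show ?case
    using assms Suc by (simp add: subfield_Fq_def)
qed simp

lemma subfield_Fq_diff:
  fixes c d :: "'a::field"
  assumes "prime CHAR('a)" and "q = CHAR('a) ^ k"
    and "c \<in> subfield_Fq q" and "d \<in> subfield_Fq q"
  shows "c - d \<in> subfield_Fq q"
proof -
  have "(c - d + d) ^ q = (c - d) ^ q + d ^ q"
    by (rule freshmans_dream'[OF assms(1,2)])
  then show ?thesis
    using assms(3,4) by (simp add: subfield_Fq_def eq_diff_eq)
qed

lemma inj_on_Fq_combinations:
  fixes \<beta> :: "nat \<Rightarrow> 'a::field"
  assumes "prime CHAR('a)" and "q = CHAR('a) ^ k" and li: "lin_indep_over_Fq q m \<beta>"
  shows "inj_on (\<lambda>c. \<Sum>j=1..m. c j * \<beta> j) (PiE {1..m} (\<lambda>_. subfield_Fq q))"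
proof (rule inj_onI)
  fix c d
  assume c: "c \<in> PiE {1..m} (\<lambda>_. subfield_Fq q)" and d: "d \<in> PiE {1..m} (\<lambda>_. subfield_Fq q)"
    and eq: "(\<Sum>j=1..m. c j * \<beta> j) = (\<Sum>j=1..m. d j * \<beta> j)"
  have "\<forall>j\<in>{1..m}. c j - d j \<in> subfield_Fq q"
    using c d subfield_Fq_diff[OF assms(1,2)] by auto
  moreover have "(\<Sum>j=1..m. (c j - d j) * \<beta> j) = 0"
    using eq by (simp add: left_diff_distrib sum_subtractf)
  ultimately have "\<forall>j\<in>{1..m}. c j - d j = 0"
    using li[unfolded lin_indep_over_Fq_def, rule_format, of "\<lambda>j. c j - d j"] by blast
  then show "c = d"
    using c d by (intro PiE_ext) auto
qed

definition linearized_poly :: "nat \<Rightarrow> nat \<Rightarrow> (nat \<Rightarrow> 'a::comm_semiring_1) \<Rightarrow> 'a poly" where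
  "linearized_poly q m a = (\<Sum>i<m. Polynomial.monom (a i) (q ^ i))"

lemma poly_linearized_poly: "poly (linearized_poly q m a) x = (\<Sum>i<m. a i * x ^ (q ^ i))"
  by (simp add: linearized_poly_def poly_sum poly_monom)

lemma coeff_linearized_poly_power:
  assumes "q \<ge> 2" and "i < m"
  shows "Polynomial.coeff (linearized_poly q m a) (q ^ i) = a i"
  using assms by (simp add: linearized_poly_def coeff_sum)

lemma degree_linearized_poly_le:
  assumes "q \<ge> 1"
  shows "degree (linearized_poly q m a) \<le> q ^ (m - 1)"
  unfolding linearized_poly_def
proof (rule degree_sum_le)
  fix i assume "i \<in> {..<m}"
  then have "q ^ i \<le> q ^ (m - 1)"
    using assms by (intro power_increasing) auto
  then show "degree (Polynomial.monom (a i) (q ^ i)) \<le> q ^ (m - 1)"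
    using degree_monom_le order.trans by blast
qed simp

lemma poly_linearized_poly_Fq_combination:
  fixes a \<beta> c :: "nat \<Rightarrow> 'a::field"
  assumes "prime CHAR('a)" and "q = CHAR('a) ^ k" and "\<forall>j\<in>A. c j \<in> subfield_Fq q"
  shows "poly (linearized_poly q m a) (\<Sum>j\<in>A. c j * \<beta> j)
           = (\<Sum>j\<in>A. c j * poly (linearized_poly q m a) (\<beta> j))"
proof -
  have "(\<Sum>j\<in>A. c j * \<beta> j) ^ (q ^ i) = (\<Sum>j\<in>A. c j * \<beta> j ^ (q ^ i))" for i
  proof -
    have "(\<Sum>j\<in>A. c j * \<beta> j) ^ (q ^ i) = (\<Sum>j\<in>A. (c j * \<beta> j) ^ (q ^ i))"
      by (rule freshmans_dream_sum'[OF assms(1), where n = "k * i"]) (simp add: assms(2) power_mult)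
    also have "\<dots> = (\<Sum>j\<in>A. c j * \<beta> j ^ (q ^ i))"
      using assms(3) by (simp add: power_mult_distrib subfield_Fq_power)
    finally show ?thesis .
  qed
  then show ?thesis
    by (simp add: poly_linearized_poly sum_distrib_left sum.swap[of _ "{..<m}"] mult_ac)
qed

lemma moore_matrix_rows_independent:
  fixes a \<beta> :: "nat \<Rightarrow> 'a::field"
  assumes char: "prime CHAR('a)" "q = CHAR('a) ^ k" and "q \<ge> 2"
    and card: "q \<le> card (subfield_Fq q :: 'a set)"
    and li: "lin_indep_over_Fq q m \<beta>"
    and rel: "\<And>j. j \<in> {1..m} \<Longrightarrow> (\<Sum>i<m. a i * \<beta> j ^ (q ^ i)) = 0"
  shows "\<forall>i<m. a i = 0"
proof (rule ccontr)
  assume "\<not> (\<forall>i<m. a i = 0)"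
  then obtain i0 where i0: "i0 < m" "a i0 \<noteq> 0"
    by auto
  define L where "L = linearized_poly q m a"
  have "L \<noteq> 0"
    using coeff_linearized_poly_power[OF \<open>q \<ge> 2\<close> i0(1), where a = a] i0(2) unfolding L_def by auto
  define K where "K = (subfield_Fq q :: 'a set)"
  define S where "S = (\<lambda>c. \<Sum>j=1..m. c j * \<beta> j) ` PiE {1..m} (\<lambda>_. K)"
  have "finite K"
    using card \<open>q \<ge> 2\<close> unfolding K_def by (metis card.infinite not_numeral_le_zero order_trans)
  have "S \<subseteq> {x. poly L x = 0}"
  proof
    fix x assume "x \<in> S"
    then obtain c where c: "\<forall>j\<in>{1..m}. c j \<in> subfield_Fq q" and x: "x = (\<Sum>j=1..m. c j * \<beta> j)"
      by (auto simp: S_def K_def)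
    have "poly L x = (\<Sum>j=1..m. c j * poly L (\<beta> j))"
      unfolding x L_def by (rule poly_linearized_poly_Fq_combination[OF char c])
    also have "\<dots> = 0"
      using rel by (simp add: L_def poly_linearized_poly)
    finally show "x \<in> {x. poly L x = 0}"
      by simp
  qed
  have "q ^ m \<le> card K ^ m"
    using card unfolding K_def by (rule power_mono) simp
  also have "\<dots> = card S"
    unfolding S_def K_def using inj_on_Fq_combinations[OF char li]
    by (simp add: card_image card_PiE)
  also have "\<dots> \<le> card {x. poly L x = 0}"
    using \<open>S \<subseteq> _\<close> poly_roots_finite[OF \<open>L \<noteq> 0\<close>] by (rule card_mono[rotated])
  also have "\<dots> \<le> degree L"
    by (rule card_poly_roots_bound[OF \<open>L \<noteq> 0\<close>])
  also have "\<dots> \<le> q ^ (m - 1)"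
    unfolding L_def using \<open>q \<ge> 2\<close> by (intro degree_linearized_poly_le) simp
  also have "\<dots> < q ^ m"
    using \<open>q \<ge> 2\<close> i0(1) by (intro power_strict_increasing) auto
  finally show False
    by simp
qed

lemma rank_eq_if_rows_independent:
  fixes A :: "'a::field mat"
  assumes A: "A \<in> carrier_mat n n"
    and rows: "\<And>v. v \<in> carrier_vec n \<Longrightarrow> (\<And>j. j < n \<Longrightarrow> (\<Sum>i<n. v $ i * A $$ (i, j)) = 0)
                 \<Longrightarrow> v = 0\<^sub>v n"
  shows "vec_space.rank n A = n"
proof -
  have "det A \<noteq> 0"
  proof
    assume "det A = 0"
    then obtain v where v: "v \<in> carrier_vec n" "v \<noteq> 0\<^sub>v n" "transpose_mat A *\<^sub>v v = 0\<^sub>v n"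
      using det_0_iff_vec_prod_zero[of "transpose_mat A" n] det_transpose[OF A] A by auto
    have "(\<Sum>i<n. v $ i * A $$ (i, j)) = 0" if "j < n" for j
    proof -
      have "(transpose_mat A *\<^sub>v v) $ j = 0"
        using v(3) that by simp
      then show ?thesis
        using that A v(1) by (simp add: scalar_prod_def lessThan_atLeast0 mult.commute)
    qed
    then have "v = 0\<^sub>v n"
      using rows v(1) by blast
    with v(2) show False ..
  qed
  then show ?thesis
    using vec_space.det_rank_iff[OF A] by simp
qed

theorem corollary2p17:
  fixes \<gamma> :: "'a::{field,finite}" and \<beta> :: "nat \<Rightarrow> 'a" and q m l :: nat
  assumes "q \<ge> 2" and "m \<ge> 1" and "card (UNIV :: 'a set) = q ^ m"
    and "mult_generator \<gamma>"
    and "l \<le> q - 2"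
    and "lin_indep_over_Fq q m \<beta>"
  shows "vec_space.rank m
           (mat m m (\<lambda>(i, j). \<gamma> ^ (l * (\<Sum>k<i. q ^ k)) * \<beta> (j + 1) ^ (q ^ i - 1))) = m"
proof (rule rank_eq_if_rows_independent)
  let ?M = "mat m m (\<lambda>(i, j). \<gamma> ^ (l * (\<Sum>k<i. q ^ k)) * \<beta> (j + 1) ^ (q ^ i - 1))"
  fix v :: "'a vec"
  assume v: "v \<in> carrier_vec m" and rel: "\<And>j. j < m \<Longrightarrow> (\<Sum>i<m. v $ i * ?M $$ (i, j)) = 0"
  \<comment> \<open>Only \<open>\<gamma> \<noteq> 0\<close> matters for the row factors.\<close>
  define a where "a i = v $ i * \<gamma> ^ (l * (\<Sum>k<i. q ^ k))" for i
  have moore_rel: "(\<Sum>i<m. a i * \<beta> j ^ (q ^ i)) = 0" if j: "j \<in> {1..m}" for j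
  proof -
    have j': "j - 1 < m" "j - 1 + 1 = j"
      using j by auto
    have "a i * \<beta> j ^ (q ^ i) = \<beta> j * (v $ i * ?M $$ (i, j - 1))" if "i < m" for i
      using power_minus_mult[of "q ^ i" "\<beta> j"] \<open>q \<ge> 2\<close> j' that by (simp add: a_def mult_ac)
    then have "(\<Sum>i<m. a i * \<beta> j ^ (q ^ i)) = \<beta> j * (\<Sum>i<m. v $ i * ?M $$ (i, j - 1))"
      by (simp add: sum_distrib_left)
    then show ?thesis
      using rel[OF j'(1)] by simp
  qed
  obtain k where "q = CHAR('a) ^ k"
    using CHAR_power_if_power_eq_card[OF assms(3,2)] by blast
  then have "\<forall>i<m. a i = 0"
    using moore_matrix_rows_independent[OF prime_CHAR_finite_field _ \<open>q \<ge> 2\<close>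
        card_subfield_Fq_ge[OF assms(3,1,4)] assms(6) moore_rel] by blast
  moreover have "\<gamma> \<noteq> 0"
    using assms(4) by (simp add: mult_generator_def)
  ultimately show "v = 0\<^sub>v m"
    using v by (intro eq_vecI) (auto simp: a_def)
qed simp

end
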